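(* For every integer $n\ge 4$ there exist a boolean classifier $\kappa:\{0,1\}^n\to\{0,1\}$ and a point $\mathbf v\in\{0,1\}^n$ such that, for the sample $(\mathbf v,\kappa(\mathbf v))$, there is an irrelevant feature $i\in\mathcal F$ with $|\mathrm{Sv}(j)|<|\mathrm{Sv}(i)|$ for every $j\in\mathcal F\setminus\{i\}$ (issue I5; in particular $|\mathrm{Sv}(i)|=\max_{j\in\mathcal F}|\mathrm{Sv}(j)|$).
   Context: Let $\mathcal F=\{1,\dots,n\}$. A boolean classifier is a non-constant function $\kappa:\{0,1\}^n\to\{0,1\}$; a sample is a pair $(\mathbf v,c)$ with $\mathbf v\in\{0,1\}^n$ and $c=\kappa(\mathbf v)$. For $\mathcal S\subseteq\mathcal F$ let $\Upsilon(\mathcal S;\mathbf v)=\{\mathbf x\in\{0,1\}^n : x_j=v_j \text{ for all } j\in\mathcal S\}$ and, for any function $g$ on $\{0,1\}^n$, $\mathbf E[g\mid \mathbf x_{\mathcal S}=\mathbf v_{\mathcal S}]=|\Upsilon(\mathcal S;\mathbf v)|^{-1}\sum_{\mathbf x\in\Upsilon(\mathcal S;\mathbf v)}g(\mathbf x)$ (uniform distribution, independent features). The characteristic function is $\upsilon(\mathcal S)=\mathbf E[\kappa\mid\mathbf x_{\mathcal S}=\mathbf v_{\mathcal S}]$, and the SHAP score of feature $i$ is $\mathrm{Sv}(i)=\sum_{\mathcal S\subseteq\mathcal F\setminus\{i\}}\frac{|\mathcal S|!\,(n-|\mathcal S|-1)!}{n!}\big(\upsilon(\mathcal S\cup\{i\})-\upsilon(\mathcal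 S)\big)$. The similarity predicate is $\sigma(\mathbf x)=1$ if $\kappa(\mathbf x)=\kappa(\mathbf v)$ and $0$ otherwise. A set $\mathcal S\subseteq\mathcal F$ is a weak abductive explanation (WAXp) if $\mathbf E[\sigma\mid\mathbf x_{\mathcal S}=\mathbf v_{\mathcal S}]=1$ (i.e. $\kappa(\mathbf x)=\kappa(\mathbf v)$ for all $\mathbf x\in\Upsilon(\mathcal S;\mathbf v)$); an abductive explanation (AXp) is a WAXp $\mathcal S$ such that $\mathcal S\setminus\{t\}$ is not a WAXp for every $t\in\mathcal S$. A feature is relevant if it belongs to at least one AXp, and irrelevant otherwise. *)

theory Defs
  imports Complex_Main
begin

text \<open>Features are 1..n. A point of {0,1}^n is a function nat => bool that is
False outside {1..n} (x j = True encodes x_j = 1). A classifier is a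
function into bool (True encodes 1); only its values on the cube matter.\<close>

definition cube :: "nat \<Rightarrow> (nat \<Rightarrow> bool) set" where
  "cube n = {x. \<forall>j. j \<notin> {1..n} \<longrightarrow> \<not> x j}"

definition is_classifier :: "nat \<Rightarrow> ((nat \<Rightarrow> bool) \<Rightarrow> bool) \<Rightarrow> bool" where
  "is_classifier n \<kappa> \<longleftrightarrow> (\<exists>x\<in>cube n. \<exists>y\<in>cube n. \<kappa> x \<noteq> \<kappa> y)"

definition Ups :: "nat \<Rightarrow> nat set \<Rightarrow> (nat \<Rightarrow> bool) \<Rightarrow> (nat \<Rightarrow> bool) set" where
  "Ups n S v = {x \<in> cube n. \<forall>j\<in>S. x j = v j}"

definition cond_exp :: "nat \<Rightarrow> nat set \<Rightarrow> (nat \<Rightarrow> bool) \<Rightarrow> ((nat \<Rightarrow> bool) \<Rightarrow> real) \<Rightarrow> real" where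
  "cond_exp n S v g = (\<Sum>x\<in>Ups n S v. g x) / real (card (Ups n S v))"

definition charf :: "nat \<Rightarrow> ((nat \<Rightarrow> bool) \<Rightarrow> bool) \<Rightarrow> (nat \<Rightarrow> bool) \<Rightarrow> nat set \<Rightarrow> real" where
  "charf n \<kappa> v S = cond_exp n S v (\<lambda>x. of_bool (\<kappa> x))"

definition shap :: "nat \<Rightarrow> ((nat \<Rightarrow> bool) \<Rightarrow> bool) \<Rightarrow> (nat \<Rightarrow> bool) \<Rightarrow> nat \<Rightarrow> real" where
  "shap n \<kappa> v i = (\<Sum>S\<in>Pow ({1..n} - {i}).
      (fact (card S) * fact (n - card S - 1) / fact n) *
      (charf n \<kappa> v (S \<union> {i}) - charf n \<kappa> v S))"

definition sim :: "((nat \<Rightarrow> bool) \<Rightarrow> bool) \<Rightarrow> (nat \<Rightarrow> bool) \<Rightarrow> (nat \<Rightarrow> bool) \<Rightarrow> real" where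
  "sim \<kappa> v x = of_bool (\<kappa> x = \<kappa> v)"

definition waxp :: "nat \<Rightarrow> ((nat \<Rightarrow> bool) \<Rightarrow> bool) \<Rightarrow> (nat \<Rightarrow> bool) \<Rightarrow> nat set \<Rightarrow> bool" where
  "waxp n \<kappa> v S \<longleftrightarrow> S \<subseteq> {1..n} \<and> cond_exp n S v (sim \<kappa> v) = 1"

definition axp :: "nat \<Rightarrow> ((nat \<Rightarrow> bool) \<Rightarrow> bool) \<Rightarrow> (nat \<Rightarrow> bool) \<Rightarrow> nat set \<Rightarrow> bool" where
  "axp n \<kappa> v S \<longleftrightarrow> waxp n \<kappa> v S \<and> (\<forall>t\<in>S. \<not> waxp n \<kappa> v (S - {t}))"

definition relevant :: "nat \<Rightarrow> ((nat \<Rightarrow> bool) \<Rightarrow> bool) \<Rightarrow> (nat \<Rightarrow> bool) \<Rightarrow> nat \<Rightarrow> bool" where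
  "relevant n \<kappa> v i \<longleftrightarrow> (\<exists>S. axp n \<kappa> v S \<and> i \<in> S)"

end

theory Submission
  imports Defs
begin

text \<open>Take \<open>\<kappa> x = x\<^sub>4 \<and> (exactly two of x\<^sub>1, x\<^sub>2, x\<^sub>3)\<close> and \<open>v = (1, \<dots>, 1)\<close>, so that \<open>\<kappa> v = 0\<close>.
Feature 4 is irrelevant: switching it off can only keep the prediction 0, so it can be dropped from
every weak abductive explanation. Features beyond 4 are dummies and have SHAP score 0, and a dummy
player does not change the Shapley value of the others, so all scores are those of the 4-player game.
Evaluating its 16 coalition values gives \<open>Sv(4) = 11/64\<close> and \<open>Sv(1) = Sv(2) = Sv(3) = -23/192\<close>,
and \<open>23/192 < 11/64\<close>.\<close>

lemma finite_cube: "finite (cube n)"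
proof (rule finite_surj)
  show "cube n \<subseteq> (\<lambda>T j. j \<in> T) ` Pow {1..n}"
  proof
    fix x assume "x \<in> cube n"
    then have "{j. x j} \<in> Pow {1..n}" "x = (\<lambda>j. j \<in> {j. x j})"
      unfolding cube_def by auto
    then show "x \<in> (\<lambda>T j. j \<in> T) ` Pow {1..n}" by blast
  qed
qed simp

lemma finite_Ups: "finite (Ups n S a)"
  unfolding Ups_def using finite_cube by simp

lemma Ups_nonempty:
  assumes "S \<subseteq> {1..n}"
  shows "Ups n S a \<noteq> {}"
proof -
  have "(\<lambda>j. j \<in> {1..n} \<and> a j) \<in> Ups n S a"
    using assms unfolding Ups_def cube_def by auto
  then show ?thesis by blast
qed

lemma bij_betw_flip_Ups:
  assumes "j \<in> {1..n}" "j \<notin> S"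
  shows "bij_betw (\<lambda>x. x(j := \<not> x j))
           (Ups n (insert j S) (a(j := True))) (Ups n (insert j S) (a(j := False)))"
  by (rule bij_betw_byWitness[where f' = "\<lambda>x. x(j := \<not> x j)"])
     (use assms in \<open>auto simp: Ups_def cube_def image_subset_iff fun_upd_idem\<close>)

lemma cond_exp_split:
  assumes "j \<in> {1..n}" "j \<notin> S"
  shows "cond_exp n S a g =
    (cond_exp n (insert j S) (a(j := True)) g + cond_exp n (insert j S) (a(j := False)) g) / 2"
proof -
  define U1 where "U1 = Ups n (insert j S) (a(j := True))"
  define U0 where "U0 = Ups n (insert j S) (a(j := False))"
  have U: "Ups n S a = U1 \<union> U0" "U1 \<inter> U0 = {}"
    using assms unfolding U1_def U0_def Ups_def by auto
  have fin: "finite U1" "finite U0"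
    unfolding U1_def U0_def by (simp_all add: finite_Ups)
  have card_eq: "card U1 = card U0"
    using bij_betw_same_card[OF bij_betw_flip_Ups[OF assms]] unfolding U1_def U0_def .
  show ?thesis
  proof (cases "U1 = {}")
    case True
    then show ?thesis
      using card_eq fin U unfolding cond_exp_def U1_def[symmetric] U0_def[symmetric] by simp
  next
    case False
    then have "card U1 > 0" using fin by auto
    then show ?thesis
      using card_eq fin U
      unfolding cond_exp_def U1_def[symmetric] U0_def[symmetric]
      by (simp add: sum.union_disjoint card_Un_disjoint add_divide_distrib)
  qed
qed

lemma cond_exp_insert_dummy:
  assumes "j \<in> {1..n}" "j \<notin> S"
    and dummy: "\<And>x. x \<in> cube n \<Longrightarrow> g (x(j := \<not> x j)) = g x"
  shows "cond_exp n (insert j S) a g = cond_exp n S a g"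
proof -
  define U1 where "U1 = Ups n (insert j S) (a(j := True))"
  define U0 where "U0 = Ups n (insert j S) (a(j := False))"
  have bij: "bij_betw (\<lambda>x. x(j := \<not> x j)) U1 U0"
    using bij_betw_flip_Ups[OF assms(1,2)] unfolding U1_def U0_def .
  have "sum g U0 = sum (g \<circ> (\<lambda>x. x(j := \<not> x j))) U1"
    using sum.reindex_bij_betw[OF bij, of g] by simp
  also have "\<dots> = sum g U1"
    by (rule sum.cong) (auto simp: U1_def Ups_def dummy[symmetric])
  finally have "cond_exp n (insert j S) (a(j := True)) g = cond_exp n (insert j S) (a(j := False)) g"
    unfolding cond_exp_def U1_def[symmetric] U0_def[symmetric] bij_betw_same_card[OF bij] by simp
  moreover have "a = a(j := True) \<or> a = a(j := False)"
    by (cases "a j") (simp_all add: fun_upd_idem)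
  ultimately show ?thesis
    using cond_exp_split[OF assms(1,2), of a g] by auto
qed

lemma cond_exp_union_dummies:
  assumes "finite D" "D \<subseteq> {1..n}"
    and dummy: "\<And>d x. d \<in> D \<Longrightarrow> x \<in> cube n \<Longrightarrow> g (x(d := \<not> x d)) = g x"
  shows "cond_exp n (S \<union> D) a g = cond_exp n S a g"
  using assms
proof (induction D rule: finite_induct)
  case (insert d D)
  have "cond_exp n (insert d (S \<union> D)) a g = cond_exp n (S \<union> D) a g"
  proof (cases "d \<in> S \<union> D")
    case False
    then show ?thesis
      by (rule cond_exp_insert_dummy[rotated])
        (use insert.prems in \<open>auto simp del: fun_upd_apply\<close>)
  qed (simp add: insert_absorb)
  then show ?case using insert by simp
qed simp

lemma cond_exp_restrict:
  assumes "T \<subseteq> {1..n}"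
    and dummy: "\<And>d x. d \<in> {1..n} - K \<Longrightarrow> x \<in> cube n \<Longrightarrow> g (x(d := \<not> x d)) = g x"
  shows "cond_exp n T a g = cond_exp n (T \<inter> K) a g"
proof -
  have "cond_exp n ((T \<inter> K) \<union> (T - K)) a g = cond_exp n (T \<inter> K) a g"
    by (rule cond_exp_union_dummies) (use assms in \<open>auto intro: finite_subset\<close>)
  moreover have "(T \<inter> K) \<union> (T - K) = T" by blast
  ultimately show ?thesis by simp
qed

lemma cond_exp_const:
  assumes "S \<subseteq> {1..n}" "\<And>x. x \<in> Ups n S a \<Longrightarrow> g x = c"
  shows "cond_exp n S a g = c"
  using assms Ups_nonempty[OF assms(1), of a] finite_Ups[of n S a]
  by (simp add: cond_exp_def)

lemma cond_exp_sim_eq_1_iff: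
  assumes "v \<in> cube n"
  shows "cond_exp n S v (sim \<kappa> v) = 1 \<longleftrightarrow> (\<forall>x\<in>Ups n S v. \<kappa> x = \<kappa> v)"
proof -
  define U where "U = Ups n S v"
  have "v \<in> U" using assms unfolding U_def Ups_def by auto
  then have fin: "finite U" and pos: "card U > 0"
    using finite_Ups card_gt_0_iff unfolding U_def by blast+
  have "cond_exp n S v (sim \<kappa> v) = 1 \<longleftrightarrow> sum (\<lambda>_. 1) U = sum (sim \<kappa> v) U"
    using pos unfolding cond_exp_def U_def[symmetric] by (simp add: divide_eq_1_iff)
  also have "\<dots> \<longleftrightarrow> (\<forall>x\<in>U. sim \<kappa> v x = 1)"
  proof
    assume "sum (\<lambda>_. 1) U = sum (sim \<kappa> v) U"
    from sum_mono_inv[OF this[symmetric]] fin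
    show "\<forall>x\<in>U. sim \<kappa> v x = 1" by (auto simp: sim_def)
  qed simp
  finally show ?thesis unfolding U_def sim_def by simp
qed

lemma not_relevant_if_deviation_keeps_class:
  assumes v: "v \<in> cube n"
    and keep: "\<And>x. x \<in> cube n \<Longrightarrow> x j \<noteq> v j \<Longrightarrow> \<kappa> x = \<kappa> v"
  shows "\<not> relevant n \<kappa> v j"
proof
  assume "relevant n \<kappa> v j"
  then obtain S where "axp n \<kappa> v S" "j \<in> S" unfolding relevant_def by blast
  then have S: "S \<subseteq> {1..n}" "\<forall>x\<in>Ups n S v. \<kappa> x = \<kappa> v"
    and not_waxp: "\<not> waxp n \<kappa> v (S - {j})"
    unfolding axp_def waxp_def cond_exp_sim_eq_1_iff[OF v] by auto
  have "\<kappa> x = \<kappa> v" if "x \<in> Ups n (S - {j}) v" for x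
  proof (cases "x j = v j")
    case True
    then have "x \<in> Ups n S v" using that unfolding Ups_def by auto
    then show ?thesis using S by blast
  qed (use that keep in \<open>auto simp: Ups_def\<close>)
  then show False
    using not_waxp S unfolding waxp_def cond_exp_sim_eq_1_iff[OF v] by auto
qed

lemma shap_dummy_eq_0:
  assumes "j \<in> {1..n}" and dummy: "\<And>x. x \<in> cube n \<Longrightarrow> \<kappa> (x(j := \<not> x j)) = \<kappa> x"
  shows "shap n \<kappa> v j = 0"
  unfolding shap_def
proof (intro sum.neutral ballI)
  fix S assume "S \<in> Pow ({1..n} - {j})"
  then have "charf n \<kappa> v (insert j S) = charf n \<kappa> v S"
    unfolding charf_def using assms by (intro cond_exp_insert_dummy) auto
  then show "fact (card S) * fact (n - card S - 1) / fact n *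
      (charf n \<kappa> v (S \<union> {j}) - charf n \<kappa> v S) = 0" by simp
qed

definition shapley_weight :: "nat \<Rightarrow> nat \<Rightarrow> real" where
  "shapley_weight m s = fact s * fact (m - s - 1) / fact m"

lemma shapley_weight_step:
  assumes "s \<le> m"
  shows "shapley_weight (m + 2) s + shapley_weight (m + 2) (s + 1) = shapley_weight (m + 1) s"
proof -
  obtain r where m: "m = s + r" using assms le_Suc_ex by blast
  have "shapley_weight (m + 2) s + shapley_weight (m + 2) (s + 1)
      = (fact s * fact (r + 1) + fact (s + 1) * fact r) / fact (s + r + 2)"
    unfolding shapley_weight_def m by (simp add: add_divide_distrib algebra_simps)
  also have "\<dots> = (real (s + r + 2) * (fact s * fact r)) / (real (s + r + 2) * fact (s + r + 1))"
    by (simp add: fact_Suc algebra_simps)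
  also have "\<dots> = shapley_weight (m + 1) s"
    unfolding shapley_weight_def m by simp
  finally show ?thesis .
qed

lemma sum_Pow_insert:
  assumes "finite M" "d \<notin> M"
  shows "(\<Sum>S\<in>Pow (insert d M). f S) = (\<Sum>S\<in>Pow M. f S + f (insert d S))"
proof -
  have "inj_on (insert d) (Pow M)"
    using assms(2) unfolding inj_on_def by (metis Diff_insert_absorb PowD in_mono)
  moreover have "Pow M \<inter> insert d ` Pow M = {}" using assms(2) by auto
  ultimately show ?thesis
    unfolding Pow_insert using assms(1) by (simp add: sum.union_disjoint sum.reindex sum.distrib)
qed

lemma sum_Pow_shapley_weight_dummies:
  assumes "finite D" "finite K" "D \<inter> K = {}"
  shows "(\<Sum>S\<in>Pow (K \<union> D). shapley_weight (card (K \<union> D) + 1) (card S) * h (S \<inter> K))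
       = (\<Sum>S\<in>Pow K. shapley_weight (card K + 1) (card S) * h S)"
  using assms
proof (induction D rule: finite_induct)
  case empty
  show ?case by (rule sum.cong) (auto simp: Int_absorb2)
next
  case (insert d D)
  define N where "N = K \<union> D"
  have d: "d \<notin> N" and fin: "finite N" using insert unfolding N_def by auto
  have "(\<Sum>S\<in>Pow (insert d N). shapley_weight (card (insert d N) + 1) (card S) * h (S \<inter> K))
      = (\<Sum>S\<in>Pow N. shapley_weight (card N + 2) (card S) * h (S \<inter> K)
          + shapley_weight (card N + 2) (card (insert d S)) * h (insert d S \<inter> K))"
    using sum_Pow_insert[OF fin d] d fin by simp
  also have "\<dots> = (\<Sum>S\<in>Pow N. shapley_weight (card N + 1) (card S) * h (S \<inter> K))"
  proof (rule sum.cong)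
    fix S assume S: "S \<in> Pow N"
    then have "finite S" "d \<notin> S" using d fin finite_subset by auto
    then have "card (insert d S) = card S + 1" "insert d S \<inter> K = S \<inter> K"
      using insert.prems by auto
    moreover have "card S \<le> card N" using S fin by (simp add: card_mono)
    ultimately show "shapley_weight (card N + 2) (card S) * h (S \<inter> K)
        + shapley_weight (card N + 2) (card (insert d S)) * h (insert d S \<inter> K)
        = shapley_weight (card N + 1) (card S) * h (S \<inter> K)"
      by (metis distrib_right shapley_weight_step)
  qed simp
  finally show ?case using insert unfolding N_def by simp
qed

lemma shap_restrict_features:
  assumes K: "K \<subseteq> {1..n}" "j \<in> K"
    and dummy: "\<And>d x. d \<in> {1..n} - K \<Longrightarrow> x \<in> cube n \<Longrightarrow> \<kappa> (x(d := \<not> x d)) = \<kappa> x"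
  shows "shap n \<kappa> v j = (\<Sum>S\<in>Pow (K - {j}).
           shapley_weight (card K) (card S) * (charf n \<kappa> v (S \<union> {j}) - charf n \<kappa> v S))"
proof -
  define K' where "K' = K - {j}"
  define D where "D = {1..n} - K"
  define h where "h S = charf n \<kappa> v (S \<union> {j}) - charf n \<kappa> v S" for S
  have charf_restrict: "charf n \<kappa> v T = charf n \<kappa> v (T \<inter> K)" if "T \<subseteq> {1..n}" for T
    unfolding charf_def by (rule cond_exp_restrict) (use that dummy in auto)
  have N: "{1..n} - {j} = K' \<union> D" and disj: "D \<inter> K' = {}"
    using K unfolding K'_def D_def by auto
  have fin: "finite K'" "finite D"
    using K finite_subset unfolding K'_def D_def by auto
  have "j \<in> {1..n}" "finite K" using K finite_subset by auto
  moreover from this have "card K > 0" using K(2) card_gt_0_iff by blast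
  ultimately have card_N: "card (K' \<union> D) + 1 = n" and card_K: "card K' + 1 = card K"
    unfolding N[symmetric] unfolding K'_def using K(2) by simp_all
  have h_restrict: "h S = h (S \<inter> K')" if "S \<subseteq> {1..n} - {j}" for S
  proof -
    have sub: "S \<union> {j} \<subseteq> {1..n}" "S \<inter> K' \<union> {j} \<subseteq> {1..n}" "S \<inter> K' \<subseteq> {1..n}"
      using that K by auto
    have "(S \<union> {j}) \<inter> K = (S \<inter> K' \<union> {j}) \<inter> K" "S \<inter> K = S \<inter> K' \<inter> K"
      using that K unfolding K'_def by auto
    then show ?thesis
      unfolding h_def using that sub charf_restrict by (metis Diff_subset order_trans)
  qed
  have "shap n \<kappa> v j = (\<Sum>S\<in>Pow (K' \<union> D). shapley_weight n (card S) * h S)"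
    unfolding shap_def N shapley_weight_def h_def ..
  also have "\<dots> = (\<Sum>S\<in>Pow (K' \<union> D). shapley_weight (card (K' \<union> D) + 1) (card S) * h (S \<inter> K'))"
    using h_restrict N card_N by (intro sum.cong) auto
  also have "\<dots> = (\<Sum>S\<in>Pow K'. shapley_weight (card K) (card S) * h S)"
    using sum_Pow_shapley_weight_dummies[OF fin(2,1) disj] card_K by simp
  finally show ?thesis unfolding K'_def h_def .
qed

definition exactly_two :: "bool \<Rightarrow> bool \<Rightarrow> bool \<Rightarrow> bool" where
  "exactly_two a b c \<longleftrightarrow> (a \<and> b \<and> \<not> c) \<or> (a \<and> \<not> b \<and> c) \<or> (\<not> a \<and> b \<and> c)"

definition example_classifier :: "(nat \<Rightarrow> bool) \<Rightarrow> bool" where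
  "example_classifier x \<longleftrightarrow> x 4 \<and> exactly_two (x 1) (x 2) (x 3)"

definition all_ones :: "nat \<Rightarrow> nat \<Rightarrow> bool" where
  "all_ones n j \<longleftrightarrow> j \<in> {1..n}"

lemma all_ones_in_cube: "all_ones n \<in> cube n"
  unfolding all_ones_def cube_def by simp

lemma example_classifier_upd_other:
  "d \<notin> {1, 2, 3, 4} \<Longrightarrow> example_classifier (x(d := b)) = example_classifier x"
  unfolding example_classifier_def by simp

lemma example_classifier_feature_4_irrelevant:
  "\<not> relevant n example_classifier (all_ones n) 4"
proof (rule not_relevant_if_deviation_keeps_class[OF all_ones_in_cube])
  fix x assume "x \<in> cube n" "x 4 \<noteq> all_ones n 4"
  then have "\<not> x 4" unfolding cube_def all_ones_def by auto
  then show "example_classifier x = example_classifier (all_ones n)"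
    unfolding example_classifier_def all_ones_def exactly_two_def by simp
qed

lemma cond_exp_example_classifier_const:
  assumes "{1, 2, 3, 4} \<subseteq> S" "S \<subseteq> {1..n}"
  shows "cond_exp n S a (\<lambda>x. of_bool (example_classifier x)) =
    of_bool (a 4 \<and> exactly_two (a 1) (a 2) (a 3))"
  by (rule cond_exp_const) (use assms in \<open>auto simp: Ups_def example_classifier_def\<close>)

text \<open>\<open>example_charf b\<^sub>1 b\<^sub>2 b\<^sub>3 b\<^sub>4\<close> is the characteristic function of the coalition
\<open>{i. b\<^sub>i}\<close> of the 4-player game: coalition members are fixed to \<open>v\<^sub>i = 1\<close>, the remaining
relevant features are averaged over.\<close>

definition bit_mean :: "bool \<Rightarrow> (bool \<Rightarrow> real) \<Rightarrow> real" where
  "bit_mean fixed f = (if fixed then f True else (f True + f False) / 2)"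

definition example_charf :: "bool \<Rightarrow> bool \<Rightarrow> bool \<Rightarrow> bool \<Rightarrow> real" where
  "example_charf b1 b2 b3 b4 =
     bit_mean b1 (\<lambda>c1. bit_mean b2 (\<lambda>c2. bit_mean b3 (\<lambda>c3. bit_mean b4 (\<lambda>c4.
       of_bool (c4 \<and> exactly_two c1 c2 c3)))))"

lemma charf_example_classifier_if:
  assumes "n \<ge> 4"
  shows "charf n example_classifier (all_ones n)
      ((if b1 then {1} else {}) \<union> (if b2 then {2} else {}) \<union>
       (if b3 then {3} else {}) \<union> (if b4 then {4} else {}))
    = example_charf b1 b2 b3 b4"
  using assms
  by (cases b1; cases b2; cases b3; cases b4;
      simp add: charf_def cond_exp_split[of 1] cond_exp_split[of 2]
        cond_exp_split[of 3] cond_exp_split[of 4];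
      simp add: cond_exp_example_classifier_const all_ones_def exactly_two_def;
      simp add: example_charf_def bit_mean_def exactly_two_def)

lemma charf_example_classifier:
  assumes "n \<ge> 4" "B \<subseteq> {1, 2, 3, 4}"
  shows "charf n example_classifier (all_ones n) B =
    example_charf (1 \<in> B) (2 \<in> B) (3 \<in> B) (4 \<in> B)"
proof -
  have "B = (if 1 \<in> B then {1} else {}) \<union> (if 2 \<in> B then {2} else {}) \<union>
      (if 3 \<in> B then {3} else {}) \<union> (if 4 \<in> B then {4} else {})"
    using assms(2) by auto
  then show ?thesis using charf_example_classifier_if[OF assms(1)] by metis
qed

lemma shap_example_classifier_relevant_features:
  assumes "n \<ge> 4" "j \<in> {1, 2, 3, 4}"
  shows "shap n example_classifier (all_ones n) j = (\<Sum>S\<in>Pow ({1, 2, 3, 4} - {j}).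
      shapley_weight 4 (card S) *
      (charf n example_classifier (all_ones n) (S \<union> {j}) - charf n example_classifier (all_ones n) S))"
proof -
  have "card {1, 2, 3, 4 :: nat} = 4" by simp
  moreover have "shap n example_classifier (all_ones n) j = (\<Sum>S\<in>Pow ({1, 2, 3, 4} - {j}).
      shapley_weight (card {1, 2, 3, 4 :: nat}) (card S) *
      (charf n example_classifier (all_ones n) (S \<union> {j}) - charf n example_classifier (all_ones n) S))"
    by (rule shap_restrict_features) (use assms in \<open>auto simp: example_classifier_upd_other\<close>)
  ultimately show ?thesis by (simp only:)
qed

lemma shap_example_classifier:
  assumes "n \<ge> 4"
  shows "shap n example_classifier (all_ones n) 4 = 11/64"
    and "j \<in> {1, 2, 3} \<Longrightarrow> shap n example_classifier (all_ones n) j = -23/192"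
  using assms
  by (auto simp: shap_example_classifier_relevant_features sum_Pow_insert insert_Diff_if
      shapley_weight_def fact_numeral charf_example_classifier example_charf_def bit_mean_def
      exactly_two_def)

theorem proposition4:
  fixes n :: nat
  assumes "n \<ge> 4"
  shows "\<exists>\<kappa> v. is_classifier n \<kappa> \<and> v \<in> cube n \<and>
           (\<exists>i\<in>{1..n}. \<not> relevant n \<kappa> v i \<and>
              (\<forall>j\<in>{1..n} - {i}. \<bar>shap n \<kappa> v j\<bar> < \<bar>shap n \<kappa> v i\<bar>))"
proof (intro exI conjI bexI ballI)
  have "(all_ones n)(3 := False) \<in> cube n"
    using all_ones_in_cube[of n] unfolding cube_def by simp
  moreover have "example_classifier (all_ones n) \<noteq> example_classifier ((all_ones n)(3 := False))"
    using assms by (simp add: example_classifier_def all_ones_def exactly_two_def)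
  ultimately show "is_classifier n example_classifier"
    unfolding is_classifier_def using all_ones_in_cube by blast
  show "all_ones n \<in> cube n" "4 \<in> {1..n}" "\<not> relevant n example_classifier (all_ones n) 4"
    using assms all_ones_in_cube example_classifier_feature_4_irrelevant by auto
  fix j assume j: "j \<in> {1..n} - {4}"
  have "shap n example_classifier (all_ones n) j \<in> {0, -23/192}"
  proof (cases "j \<in> {1, 2, 3}")
    case False
    with j have "shap n example_classifier (all_ones n) j = 0"
      by (intro shap_dummy_eq_0) (auto simp: example_classifier_upd_other)
    then show ?thesis by simp
  qed (simp add: shap_example_classifier(2)[OF assms])
  then show "\<bar>shap n example_classifier (all_ones n) j\<bar> < \<bar>shap n example_classifier (all_ones n) 4\<bar>"
    using shap_example_classifier(1)[OF assms] by auto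
qed

end
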